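(* Let $\psi:\mathbb{N}\to\mathbb{R}_{\ge0}$ satisfy $\lim_{q\to\infty}\psi(q)/q=0$, fix $\delta>0$, and suppose $\psi(q)\ge\delta$ for every $q\in\mathbb{N}$ with $\psi(q)\ne0$. Let $(\mathcal{I}_q)_{q\in\mathbb{N}}$ be any sequence with $\mathcal{I}_q\subseteq\mathbb{Z}_q$. Then the following are equivalent: (a) there exists $\gamma\in\mathbb{R}$ such that $\mu(\limsup_{q\to\infty}E_q^{\mathcal{I}}(\gamma,\psi))=1$; (b) for every $\gamma\in\mathbb{R}$, $\mu(\limsup_{q\to\infty}E_q^{\mathcal{I}}(\gamma,\psi))=1$.
   Context: $\mu$ is Lebesgue measure, $\mathbb{Z}_q=\{0,\dots,q-1\}$, and $\|y\|$ denotes the distance from $y\in\mathbb{R}$ to the nearest integer. For $\gamma\in\mathbb{R}$, $$E_q^{\mathcal{I}}(\gamma,\psi):=\Big\{x\in[0,1]:\Big\|x-\frac{a+\gamma}{q}\Big\|\le\frac{\psi(q)}{q}\text{ for some }a\in\mathcal{I}_q\Big\}.$$ *)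

theory Defs
  imports "HOL-Analysis.Analysis" "HOL-Library.Liminf_Limsup"
begin

definition dist_nint :: "real \<Rightarrow> real" where
  "dist_nint y = (INF k\<in>(\<int>::real set). \<bar>y - k\<bar>)"

definition E_set :: "(nat \<Rightarrow> nat set) \<Rightarrow> real \<Rightarrow> (nat \<Rightarrow> real) \<Rightarrow> nat \<Rightarrow> real set" where
  "E_set I \<gamma> \<psi> q = {x \<in> {0..1}. \<exists>a\<in>I q.
      dist_nint (x - (real a + \<gamma>) / real q) \<le> \<psi> q / real q}"

end

theory Submission
  imports Defs
begin

text \<open>Replacing \<open>\<gamma>\<close> by \<open>\<gamma> + t\<close> moves every interval of \<open>E\<^sub>q(\<gamma>)\<close> by \<open>t/q\<close>. When \<open>\<bar>t\<bar> \<le> \<delta>/2\<close>,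
  every nondegenerate interval has radius \<open>\<psi>(q)/q \<ge> \<delta>/q \<ge> 2\<bar>t\<bar>/q\<close>, so its concentric half lies
  in the shifted interval. Hence a point of \<open>limsup E(\<gamma>)\<close> that eventually leaves \<open>E(\<gamma> + t)\<close> lies
  in arbitrarily small intervals whose concentric halves miss the set of all such points, and a
  Vitali covering argument shows that this set is null. Thus full measure passes from \<open>\<gamma>\<close> to
  \<open>\<gamma> + t\<close>, and in finitely many such steps to every \<open>\<gamma>'\<close>.\<close>

lemma emeasure_UN_cballs_eq_twice_half_cballs:
  fixes c :: "'i \<Rightarrow> real"
  assumes C: "countable C" and r: "\<And>i. i \<in> C \<Longrightarrow> 0 < r i"
    and disj: "pairwise (\<lambda>i j. disjnt (cball (c i) (r i)) (cball (c j) (r j))) C"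
  shows "emeasure lebesgue (\<Union>i\<in>C. cball (c i) (r i))
       = 2 * emeasure lebesgue (\<Union>i\<in>C. cball (c i) (r i / 2))"
proof -
  have disj_full: "disjoint_family_on (\<lambda>i. cball (c i) (r i)) C"
    using disj by (auto simp: disjoint_family_on_def pairwise_def disjnt_def)
  have "cball (c i) (r i / 2) \<subseteq> cball (c i) (r i)" if "i \<in> C" for i
    using r[OF that] by (intro subset_cball) auto
  then have disj_half: "disjoint_family_on (\<lambda>i. cball (c i) (r i / 2)) C"
    using disj_full by (fastforce simp: disjoint_family_on_def)
  have "emeasure lebesgue (\<Union>i\<in>C. cball (c i) (r i))
      = (\<integral>\<^sup>+i. emeasure lebesgue (cball (c i) (r i)) \<partial>count_space C)"
    by (rule emeasure_UN_countable[OF _ C disj_full]) auto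
  also have "\<dots> = (\<integral>\<^sup>+i. 2 * emeasure lebesgue (cball (c i) (r i / 2)) \<partial>count_space C)"
    using r by (intro nn_integral_cong) (auto simp: cball_eq_atLeastAtMost ennreal_mult' less_imp_le)
  also have "\<dots> = 2 * (\<integral>\<^sup>+i. emeasure lebesgue (cball (c i) (r i / 2)) \<partial>count_space C)"
    by (rule nn_integral_cmult) auto
  also have "(\<integral>\<^sup>+i. emeasure lebesgue (cball (c i) (r i / 2)) \<partial>count_space C)
      = emeasure lebesgue (\<Union>i\<in>C. cball (c i) (r i / 2))"
    by (rule emeasure_UN_countable[OF _ C disj_half, symmetric]) auto
  finally show ?thesis .
qed

text \<open>Vitali covers \<open>S\<close>, up to a null set, by disjoint balls inside \<open>U\<close>; their concentric
  halves miss \<open>S\<close> and carry half of the measure of the cover.\<close>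

lemma measure_le_half_if_avoids_half_cballs:
  fixes S U :: "real set"
  assumes S: "S \<in> lmeasurable" and U: "open U" "S \<subseteq> U" "U \<in> lmeasurable"
    and avoid: "\<And>x d. x \<in> S \<Longrightarrow> 0 < d \<Longrightarrow>
      \<exists>c r. 0 < r \<and> r < d \<and> x \<in> cball c r \<and> S \<inter> cball c (r / 2) = {}"
  shows "measure lebesgue S \<le> measure lebesgue U / 2"
proof -
  define K where
    "K = {i. 0 < snd i \<and> S \<inter> cball (fst i) (snd i / 2) = {} \<and> cball (fst i) (snd i) \<subseteq> U}"
  have K_pos: "\<And>i. i \<in> K \<Longrightarrow> 0 < snd i"
    by (simp add: K_def)
  have cover: "\<exists>i. i \<in> K \<and> x \<in> cball (fst i) (snd i) \<and> snd i < d" if x: "x \<in> S" and "0 < d" for x d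
  proof -
    obtain e where e: "0 < e" "ball x e \<subseteq> U"
      using U(1,2) x open_contains_ball by blast
    obtain c r where cr: "0 < r" "r < min d (e / 2)" "x \<in> cball c r" "S \<inter> cball c (r / 2) = {}"
      using avoid[OF x, of "min d (e / 2)"] \<open>0 < d\<close> e(1) by auto
    have "cball c r \<subseteq> ball x e"
    proof
      fix y assume "y \<in> cball c r"
      then have "dist x y \<le> 2 * r"
        using cr(3) dist_triangle3[of x y c] by simp
      then show "y \<in> ball x e"
        using cr(2) by simp
    qed
    with cr e show ?thesis
      by (intro exI[of _ "(c, r)"]) (auto simp: K_def)
  qed
  obtain C where C: "countable C" "C \<subseteq> K"
      "pairwise (\<lambda>i j. disjnt (cball (fst i) (snd i)) (cball (fst j) (snd j))) C"
      "negligible (S - (\<Union>i\<in>C. cball (fst i) (snd i)))"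
    using Vitali_covering_theorem_cballs[of K snd S fst, OF K_pos cover] by blast
  define W where "W = (\<Union>i\<in>C. cball (fst i) (snd i))"
  define H where "H = (\<Union>i\<in>C. cball (fst i) (snd i / 2))"
  have rpos: "\<And>i. i \<in> C \<Longrightarrow> 0 < snd i"
    using C(2) K_pos by blast
  have WU: "W \<subseteq> U" and SH: "S \<inter> H = {}"
    using C(2) unfolding W_def H_def K_def by blast+
  have HW: "H \<subseteq> W"
    unfolding W_def H_def using rpos by (intro UN_mono subset_cball) auto
  have W_sets: "W \<in> sets lebesgue" and H_sets: "H \<in> sets lebesgue"
    unfolding W_def H_def using C(1) by (auto intro!: sets.countable_UN'')
  have W: "W \<in> lmeasurable"
    by (rule fmeasurableI2[OF U(3) WU W_sets])
  have H: "H \<in> lmeasurable"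
    by (rule fmeasurableI2[OF W HW H_sets])
  have "emeasure lebesgue W = 2 * emeasure lebesgue H"
    unfolding W_def H_def by (rule emeasure_UN_cballs_eq_twice_half_cballs[OF C(1) rpos C(3)])
  then have WH: "measure lebesgue W = 2 * measure lebesgue H"
    by (simp add: measure_def enn2real_mult)
  have "measure lebesgue S \<le> measure lebesgue ((S - W) \<union> (W - H))"
    using SH S fmeasurableD[OF S] W H
    by (intro measure_mono_fmeasurable fmeasurable.Un fmeasurable_Diff) auto
  also have "\<dots> \<le> measure lebesgue (S - W) + measure lebesgue (W - H)"
    using fmeasurableD[OF S] W_sets H_sets by (intro measure_Un_le sets.Diff)
  also have "\<dots> = measure lebesgue W - measure lebesgue H"
    using C(4) measurable_measure_Diff[OF W H_sets HW]
    by (simp add: W_def negligible_iff_measure)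
  also have "\<dots> \<le> measure lebesgue U / 2"
    using WH measure_mono_fmeasurable[OF WU W_sets U(3)] by simp
  finally show ?thesis .
qed

lemma negligible_if_avoids_half_cballs:
  fixes S :: "real set"
  assumes S: "S \<in> lmeasurable"
    and avoid: "\<And>x d. x \<in> S \<Longrightarrow> 0 < d \<Longrightarrow>
      \<exists>c r. 0 < r \<and> r < d \<and> x \<in> cball c r \<and> S \<inter> cball c (r / 2) = {}"
  shows "negligible S"
proof -
  have S_sets: "S \<in> sets lebesgue"
    using S by (rule fmeasurableD)
  have "measure lebesgue S \<le> e" if e: "0 < e" for e
  proof -
    obtain U where U: "open U" "S \<subseteq> U" "U - S \<in> lmeasurable" "emeasure lebesgue (U - S) < ennreal e"
      using sets_lebesgue_outer_open[OF S_sets e] by blast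
    have UL: "U \<in> lmeasurable"
      using fmeasurable_Diff_D[OF U(3) S U(2)] .
    have "measure lebesgue (U - S) < e"
      using U(4) emeasure_eq_measure2[OF U(3)] e by (simp add: ennreal_less_iff)
    then have "measure lebesgue U \<le> measure lebesgue S + e"
      using measurable_measure_Diff[OF UL _ U(2)] S by auto
    moreover have "measure lebesgue S \<le> measure lebesgue U / 2"
      using measure_le_half_if_avoids_half_cballs[OF S U(1,2) UL avoid] by blast
    ultimately show ?thesis by linarith
  qed
  then have "measure lebesgue S = 0"
    by (meson measure_nonneg dense_le_bounded order_antisym not_le)
  with S show ?thesis by (simp add: negligible_iff_measure)
qed

lemma measure_eq_1_iff_negligible_Diff:
  fixes A :: "real set"
  assumes A: "A \<in> sets lebesgue" "A \<subseteq> {0..1}"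
  shows "measure lebesgue A = 1 \<longleftrightarrow> negligible ({0..1} - A)"
proof -
  have unit: "{0..1::real} \<in> lmeasurable" by simp
  then have "{0..1} - A \<in> lmeasurable"
    using A(1) by (rule fmeasurable_Diff)
  moreover have "measure lebesgue ({0..1} - A) = 1 - measure lebesgue A"
    using measurable_measure_Diff[OF unit A] by simp
  ultimately show ?thesis by (auto simp: negligible_iff_measure)
qed

lemma dist_nint_eq: "dist_nint y = \<bar>y - of_int (round y)\<bar>"
  unfolding dist_nint_def
proof (rule antisym)
  show "(INF k\<in>\<int>. \<bar>y - k\<bar>) \<le> \<bar>y - of_int (round y)\<bar>"
    by (rule cINF_lower) (auto intro: bdd_belowI[of _ 0])
  show "\<bar>y - of_int (round y)\<bar> \<le> (INF k\<in>\<int>. \<bar>y - k\<bar>)"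
    by (rule cINF_greatest) (auto elim!: Ints_cases intro: round_diff_minimal)
qed

lemma dist_nint_le_iff: "dist_nint y \<le> r \<longleftrightarrow> (\<exists>k::int. \<bar>y - of_int k\<bar> \<le> r)"
  using round_diff_minimal[of y] by (auto simp: dist_nint_eq intro: order_trans)

lemma E_set_eq_UN_cball:
  "E_set I \<gamma> \<psi> q = {0..1} \<inter>
     (\<Union>a\<in>I q. \<Union>k::int. cball ((real a + \<gamma>) / real q + of_int k) (\<psi> q / real q))"
  by (auto simp: E_set_def dist_nint_le_iff dist_real_def algebra_simps; metis abs_minus_commute)

lemma E_set_sets: "E_set I \<gamma> \<psi> q \<in> sets lebesgue"
  unfolding E_set_eq_UN_cball by (intro sets.Int sets.countable_UN'' borel_closed) auto

lemma limsup_E_set_sets: "limsup (E_set I \<gamma> \<psi>) \<in> sets lebesgue"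
  unfolding limsup_INF_SUP using E_set_sets by measurable

lemma limsup_E_set_subset: "limsup (E_set I \<gamma> \<psi>) \<subseteq> {0..1}"
  by (auto simp: mem_limsup_iff frequently_sequentially E_set_def)

text \<open>The centres of all intervals of all \<open>E\<^sub>q(\<gamma>)\<close>. A point of \<open>limsup E(\<gamma>)\<close> outside this
  countable set only meets intervals of positive radius.\<close>

definition shifted_fractions :: "real \<Rightarrow> real set" where
  "shifted_fractions \<gamma> =
     (\<lambda>(q, a, k). (real a + \<gamma>) / real q + of_int k) ` (UNIV :: (nat \<times> nat \<times> int) set)"

lemma negligible_shifted_fractions: "negligible (shifted_fractions \<gamma>)"
  unfolding shifted_fractions_def negligible_iff_null_sets
  by (intro null_sets_completionI countable_imp_null_set_lborel) simp

lemma half_cball_subset_E_set_shift: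
  assumes "a \<in> I q" "0 < q" "\<bar>t\<bar> \<le> \<psi> q / 2"
  shows "{0..1} \<inter> cball ((real a + \<gamma>) / real q + of_int k) (\<psi> q / real q / 2)
           \<subseteq> E_set I (\<gamma> + t) \<psi> q" (is "_ \<inter> cball ?c _ \<subseteq> _")
proof
  fix y assume y: "y \<in> {0..1} \<inter> cball ?c (\<psi> q / real q / 2)"
  have "dist (?c + t / real q) ?c \<le> \<psi> q / real q / 2"
    using assms(2,3) by (simp add: dist_real_def field_simps)
  then have "dist (?c + t / real q) y \<le> \<psi> q / real q"
    using y dist_triangle[of "?c + t / real q" y ?c] by simp
  moreover have "(real a + (\<gamma> + t)) / real q + of_int k = ?c + t / real q"
    by (simp add: add_divide_distrib)
  ultimately have "y \<in> cball ((real a + (\<gamma> + t)) / real q + of_int k) (\<psi> q / real q)"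
    by (simp add: add_ac)
  then show "y \<in> E_set I (\<gamma> + t) \<psi> q"
    unfolding E_set_eq_UN_cball using y assms(1) by blast
qed

lemma limsup_E_set_small_cball:
  assumes lim: "(\<lambda>q. \<psi> q / real q) \<longlonglongrightarrow> 0"
    and x: "x \<in> limsup (E_set I \<gamma> \<psi>)" "x \<notin> shifted_fractions \<gamma>" and "0 < d"
  obtains q a k where "n \<le> q" "0 < q" "a \<in> I q" "0 < \<psi> q / real q" "\<psi> q / real q < d"
    "x \<in> cball ((real a + \<gamma>) / real q + of_int k) (\<psi> q / real q)"
proof -
  obtain N where N: "\<And>q. q \<ge> N \<Longrightarrow> \<bar>\<psi> q / real q\<bar> < d"
    using lim \<open>0 < d\<close> by (auto simp: LIMSEQ_def dist_real_def)
  have "\<exists>q\<ge>max n (max N 1). x \<in> E_set I \<gamma> \<psi> q"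
    using x(1) unfolding mem_limsup_iff frequently_sequentially by blast
  then obtain q where q: "max n (max N 1) \<le> q" "x \<in> E_set I \<gamma> \<psi> q"
    by blast
  then obtain a and k :: int where a: "a \<in> I q"
    and xk: "x \<in> cball ((real a + \<gamma>) / real q + of_int k) (\<psi> q / real q)"
    unfolding E_set_eq_UN_cball by blast
  have "(real a + \<gamma>) / real q + of_int k \<in> shifted_fractions \<gamma>"
    unfolding shifted_fractions_def by (rule image_eqI[of _ _ "(q, a, k)"]) auto
  then have "x \<noteq> (real a + \<gamma>) / real q + of_int k"
    using x(2) by blast
  then have "0 < \<psi> q / real q"
    using xk by (metis dist_pos_lt mem_cball order.strict_trans2)
  moreover have "\<psi> q / real q < d"
    using N[of q] q(1) abs_ge_self[of "\<psi> q / real q"] by simp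
  ultimately show thesis
    using that[OF _ _ a _ _ xk] q(1) by simp
qed

lemma negligible_limsup_E_set_escaping_shift:
  assumes lim: "(\<lambda>q. \<psi> q / real q) \<longlonglongrightarrow> 0"
    and delta: "\<And>q. q \<ge> 1 \<Longrightarrow> \<psi> q \<noteq> 0 \<Longrightarrow> \<psi> q \<ge> \<delta>"
    and t: "\<bar>t\<bar> \<le> \<delta> / 2"
  shows "negligible {x \<in> limsup (E_set I \<gamma> \<psi>) - shifted_fractions \<gamma>.
                      \<forall>q\<ge>n. x \<notin> E_set I (\<gamma> + t) \<psi> q}"
    (is "negligible ?S")
proof (rule negligible_if_avoids_half_cballs)
  have "?S = limsup (E_set I \<gamma> \<psi>) - shifted_fractions \<gamma> - (\<Union>q\<in>{n..}. E_set I (\<gamma> + t) \<psi> q)"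
    by blast
  then have "?S \<in> sets lebesgue"
    using limsup_E_set_sets negligible_shifted_fractions E_set_sets
    by (simp add: negligible_imp_sets sets.Diff sets.countable_UN'')
  moreover have "bounded ?S"
    by (rule bounded_subset[of "{0..1}"]) (use limsup_E_set_subset in auto)
  ultimately show "?S \<in> lmeasurable"
    by (simp add: bounded_set_imp_lmeasurable)
  fix x d :: real
  assume "x \<in> ?S" "0 < d"
  then obtain q a k where q: "n \<le> q" "0 < q" "a \<in> I q" "0 < \<psi> q / real q" "\<psi> q / real q < d"
    and xk: "x \<in> cball ((real a + \<gamma>) / real q + of_int k) (\<psi> q / real q)"
    using limsup_E_set_small_cball[OF lim] by blast
  have "\<psi> q \<noteq> 0"
    using q(4) by auto
  then have "\<bar>t\<bar> \<le> \<psi> q / 2"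
    using delta[of q] q(2) t by simp
  with q(3,2) have "{0..1} \<inter> cball ((real a + \<gamma>) / real q + of_int k) (\<psi> q / real q / 2)
                     \<subseteq> E_set I (\<gamma> + t) \<psi> q"
    by (rule half_cball_subset_E_set_shift)
  then have "?S \<inter> cball ((real a + \<gamma>) / real q + of_int k) (\<psi> q / real q / 2) = {}"
    using q(1) limsup_E_set_subset[of I \<gamma> \<psi>] by blast
  with q(4,5) xk show "\<exists>c r. 0 < r \<and> r < d \<and> x \<in> cball c r \<and> ?S \<inter> cball c (r / 2) = {}"
    by blast
qed

lemma negligible_Diff_limsup_E_set_small_shift:
  assumes lim: "(\<lambda>q. \<psi> q / real q) \<longlonglongrightarrow> 0"
    and delta: "\<And>q. q \<ge> 1 \<Longrightarrow> \<psi> q \<noteq> 0 \<Longrightarrow> \<psi> q \<ge> \<delta>"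
    and t: "\<bar>t\<bar> \<le> \<delta> / 2"
    and full: "negligible ({0..1} - limsup (E_set I \<gamma> \<psi>))"
  shows "negligible ({0..1} - limsup (E_set I (\<gamma> + t) \<psi>))"
proof (rule negligible_subset)
  let ?S = "\<lambda>n. {x \<in> limsup (E_set I \<gamma> \<psi>) - shifted_fractions \<gamma>. \<forall>q\<ge>n. x \<notin> E_set I (\<gamma> + t) \<psi> q}"
  show "negligible (({0..1} - limsup (E_set I \<gamma> \<psi>)) \<union> shifted_fractions \<gamma> \<union> (\<Union>n. ?S n))"
    using full negligible_shifted_fractions negligible_limsup_E_set_escaping_shift[OF lim delta t]
    by (intro negligible_Un negligible_countable_Union) auto
  show "{0..1} - limsup (E_set I (\<gamma> + t) \<psi>)
        \<subseteq> ({0..1} - limsup (E_set I \<gamma> \<psi>)) \<union> shifted_fractions \<gamma> \<union> (\<Union>n. ?S n)"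
  proof
    fix x assume x: "x \<in> {0..1} - limsup (E_set I (\<gamma> + t) \<psi>)"
    then obtain n where "\<forall>q\<ge>n. x \<notin> E_set I (\<gamma> + t) \<psi> q"
      by (auto simp: mem_limsup_iff frequently_sequentially)
    with x show "x \<in> ({0..1} - limsup (E_set I \<gamma> \<psi>)) \<union> shifted_fractions \<gamma> \<union> (\<Union>n. ?S n)"
      by blast
  qed
qed

lemma negligible_Diff_limsup_E_set_shift:
  assumes lim: "(\<lambda>q. \<psi> q / real q) \<longlonglongrightarrow> 0"
    and delta_pos: "\<delta> > 0"
    and delta: "\<And>q. q \<ge> 1 \<Longrightarrow> \<psi> q \<noteq> 0 \<Longrightarrow> \<psi> q \<ge> \<delta>"
    and full: "negligible ({0..1} - limsup (E_set I \<gamma> \<psi>))"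
  shows "negligible ({0..1} - limsup (E_set I \<gamma>' \<psi>))"
proof -
  define N :: nat where "N = nat \<lceil>2 * \<bar>\<gamma>' - \<gamma>\<bar> / \<delta>\<rceil> + 1"
  define t where "t = (\<gamma>' - \<gamma>) / real N"
  have "2 * \<bar>\<gamma>' - \<gamma>\<bar> / \<delta> \<le> real N" "0 < real N"
    unfolding N_def by linarith+
  then have t_small: "\<bar>t\<bar> \<le> \<delta> / 2"
    using delta_pos by (simp add: t_def field_simps)
  have "negligible ({0..1} - limsup (E_set I (\<gamma> + real j * t) \<psi>))" for j
  proof (induction j)
    case (Suc j)
    from negligible_Diff_limsup_E_set_small_shift[OF lim delta t_small Suc]
    show ?case by (simp add: algebra_simps)
  qed (use full in simp)
  from this[of N] \<open>0 < real N\<close> show ?thesis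
    by (simp add: t_def)
qed

theorem mainTheorem8:
  fixes \<psi> :: "nat \<Rightarrow> real" and \<delta> :: real and I :: "nat \<Rightarrow> nat set"
  assumes nonneg: "\<And>q. q \<ge> 1 \<Longrightarrow> \<psi> q \<ge> 0"
    and lim: "(\<lambda>q. \<psi> q / real q) \<longlonglongrightarrow> 0"
    and delta_pos: "\<delta> > 0"
    and delta: "\<And>q. q \<ge> 1 \<Longrightarrow> \<psi> q \<noteq> 0 \<Longrightarrow> \<psi> q \<ge> \<delta>"
    and I_sub: "\<And>q. I q \<subseteq> {0..<q}"
  shows "(\<exists>\<gamma>::real. measure lebesgue (limsup (\<lambda>q. E_set I \<gamma> \<psi> q)) = 1)
     \<longleftrightarrow> (\<forall>\<gamma>::real. measure lebesgue (limsup (\<lambda>q. E_set I \<gamma> \<psi> q)) = 1)"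
proof
  assume "\<exists>\<gamma>. measure lebesgue (limsup (E_set I \<gamma> \<psi>)) = 1"
  then obtain \<gamma> where "negligible ({0..1} - limsup (E_set I \<gamma> \<psi>))"
    by (auto simp: measure_eq_1_iff_negligible_Diff[OF limsup_E_set_sets limsup_E_set_subset])
  then show "\<forall>\<gamma>'. measure lebesgue (limsup (E_set I \<gamma>' \<psi>)) = 1"
    using negligible_Diff_limsup_E_set_shift[OF lim delta_pos delta]
    by (simp add: measure_eq_1_iff_negligible_Diff[OF limsup_E_set_sets limsup_E_set_subset])
qed auto

end
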